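(* Let $L^x,L^y>0$, let $i\neq j$ be two boxes, each box $k\in\{i,j\}$ having center $(c^x_k,c^y_k)$, side lengths $(\ell^x_k,\ell^y_k)$ and given constants $lb^s_k>0$. Let $$Q^{lb}=\{(c_i,c_j,\ell_i,\ell_j)\in\mathbb{R}^8:\ \tfrac12\ell^s_k\le c^s_k\le L^s-\tfrac12\ell^s_k,\ \ell^s_k\ge lb^s_k\ \ \forall s\in\{x,y\},k\in\{i,j\}\}.$$ Consider binary variables $z^s_{p,q}$ for $s\in\{x,y\}$, $(p,q)\in\{(i,j),(j,i)\}$. Let $E$ be the set of $(c_i,c_j,\ell_i,\ell_j,z)\in\mathbb{R}^8\times\{0,1\}^4$ such that $(c_i,c_j,\ell_i,\ell_j)\in Q^{lb}$, $z$ is not identically zero, $z^s_{i,j}+z^s_{j,i}\le1$ for each $s$, $z^s_{p,q}=1$ implies $\mathscr{B}_p\leftarrow_s\mathscr{B}_q$, and whenever $z^s_{i,j}=z^s_{j,i}=0$ for a direction $s$ we have both $\mathscr{B}_i\not\leftarrow_s\mathscr{B}_j$ and $\mathscr{B}_j\not\leftarrow_s\mathscr{B}_i$. Then $E$ equals the set of $(c_i,c_j,\ell_i,\ell_j,z)$ satisfying \begin{align*} &\tfrac12\ell^s_p+lb^s_q z^s_{q,p}\le c^s_p\le L^s-\tfrac12\ell^s_p-lb^s_q z^s_{p,q} &&\forall s,\ (p,q)\in\{(i,j),(j,i)\},\\ &c^s_p+\tfrac12\ell^s_p\le c^s_q-\tfrac12\ell^s_q+L^s(1-z^s_{p,q})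 &&\forall s,\ (p,q)\in\{(i,j),(j,i)\},\\ &\ell^s_p\ge lb^s_p &&\forall s,\ p\in\{i,j\},\\ &z^x_{i,j}+z^x_{j,i}+z^y_{i,j}+z^y_{j,i}\ge1,\qquad z^s_{i,j}+z^s_{j,i}\le1 &&\forall s,\\ &z^s_{p,q}\in\{0,1\} &&\forall s,\ (p,q),\\ &c^s_p+\tfrac12\ell^s_p+L^s z^s_{p,q}\ge c^s_q-\tfrac12\ell^s_q+(lb^s_p+lb^s_q)(z^s_{i,j}+z^s_{j,i}) &&\forall s,\ (p,q)\in\{(i,j),(j,i)\}, \end{align*} where $s$ ranges over $\{x,y\}$.
   Context: Box $\mathscr{B}_p$ precedes $\mathscr{B}_q$ in direction $s$, written $\mathscr{B}_p\leftarrow_s\mathscr{B}_q$, if $c^s_p+\tfrac12\ell^s_p\le c^s_q-\tfrac12\ell^s_q$; $\mathscr{B}_p$ does not precede $\mathscr{B}_q$, written $\mathscr{B}_p\not\leftarrow_s\mathscr{B}_q$, if $c^s_p+\tfrac12\ell^s_p\ge c^s_q-\tfrac12\ell^s_q$. The set $E$ is the paper's embedding $\operatorname{Em}(Q^{lb},D^8,C^8)$: the eight branches of the refined disjunction $D^8$ are $(\mathscr{B}_i\leftarrow_y\mathscr{B}_j)\wedge(\mathscr{B}_i\not\leftarrow_x\mathscr{B}_j)\wedge(\mathscr{B}_j\not\leftarrow_x\mathscr{B}_i)$; $(\mathscr{B}_i\leftarrow_y\mathscr{B}_j)\wedge(\mathscr{B}_i\leftarrow_x\mathscr{B}_j)$;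 $(\mathscr{B}_i\leftarrow_x\mathscr{B}_j)\wedge(\mathscr{B}_i\not\leftarrow_y\mathscr{B}_j)\wedge(\mathscr{B}_j\not\leftarrow_y\mathscr{B}_i)$; $(\mathscr{B}_i\leftarrow_x\mathscr{B}_j)\wedge(\mathscr{B}_j\leftarrow_y\mathscr{B}_i)$; $(\mathscr{B}_j\leftarrow_y\mathscr{B}_i)\wedge(\mathscr{B}_i\not\leftarrow_x\mathscr{B}_j)\wedge(\mathscr{B}_j\not\leftarrow_x\mathscr{B}_i)$; $(\mathscr{B}_j\leftarrow_x\mathscr{B}_i)\wedge(\mathscr{B}_j\leftarrow_y\mathscr{B}_i)$; $(\mathscr{B}_j\leftarrow_x\mathscr{B}_i)\wedge(\mathscr{B}_i\not\leftarrow_y\mathscr{B}_j)\wedge(\mathscr{B}_j\not\leftarrow_y\mathscr{B}_i)$; $(\mathscr{B}_j\leftarrow_x\mathscr{B}_i)\wedge(\mathscr{B}_i\leftarrow_y\mathscr{B}_j)$, and each branch is encoded by the vector $z$ with $z^s_{p,q}=1$ exactly when the clause $\mathscr{B}_p\leftarrow_s\mathscr{B}_q$ appears in it. *)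

theory Defs
  imports Main "HOL.Real"
begin

datatype box = BI | BJ
datatype dir = DX | DY

fun other :: "box \<Rightarrow> box" where
  "other BI = BJ" | "other BJ = BI"

text \<open>A point: centers c k s, side lengths l k s, and binary variables z s p,
  where z s p stands for z^s_{p, other p}.\<close>
type_synonym point = "(box \<Rightarrow> dir \<Rightarrow> real) \<times> (box \<Rightarrow> dir \<Rightarrow> real) \<times> (dir \<Rightarrow> box \<Rightarrow> real)"

definition precedes :: "(box \<Rightarrow> dir \<Rightarrow> real) \<Rightarrow> (box \<Rightarrow> dir \<Rightarrow> real) \<Rightarrow> dir \<Rightarrow> box \<Rightarrow> box \<Rightarrow> bool" where
  "precedes c l s p q \<longleftrightarrow> c p s + l p s / 2 \<le> c q s - l q s / 2"

definition not_precedes :: "(box \<Rightarrow> dir \<Rightarrow> real) \<Rightarrow> (box \<Rightarrow> dir \<Rightarrow> real) \<Rightarrow> dir \<Rightarrow> box \<Rightarrow> box \<Rightarrow> bool" where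
  "not_precedes c l s p q \<longleftrightarrow> c p s + l p s / 2 \<ge> c q s - l q s / 2"

definition Qlb :: "(dir \<Rightarrow> real) \<Rightarrow> (box \<Rightarrow> dir \<Rightarrow> real) \<Rightarrow> ((box \<Rightarrow> dir \<Rightarrow> real) \<times> (box \<Rightarrow> dir \<Rightarrow> real)) set" where
  "Qlb L lb = {(c, l). \<forall>s k. l k s / 2 \<le> c k s \<and> c k s \<le> L s - l k s / 2 \<and> l k s \<ge> lb k s}"

definition Eset :: "(dir \<Rightarrow> real) \<Rightarrow> (box \<Rightarrow> dir \<Rightarrow> real) \<Rightarrow> point set" where
  "Eset L lb = {(c, l, z).
      (c, l) \<in> Qlb L lb
    \<and> (\<forall>s p. z s p \<in> {0, 1})
    \<and> (\<exists>s p. z s p \<noteq> 0)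
    \<and> (\<forall>s. z s BI + z s BJ \<le> 1)
    \<and> (\<forall>s p. z s p = 1 \<longrightarrow> precedes c l s p (other p))
    \<and> (\<forall>s. z s BI = 0 \<and> z s BJ = 0 \<longrightarrow> not_precedes c l s BI BJ \<and> not_precedes c l s BJ BI)}"

definition Formulation :: "(dir \<Rightarrow> real) \<Rightarrow> (box \<Rightarrow> dir \<Rightarrow> real) \<Rightarrow> point set" where
  "Formulation L lb = {(c, l, z).
      (\<forall>s p. l p s / 2 + lb (other p) s * z s (other p) \<le> c p s
           \<and> c p s \<le> L s - l p s / 2 - lb (other p) s * z s p)
    \<and> (\<forall>s p. c p s + l p s / 2 \<le> c (other p) s - l (other p) s / 2 + L s * (1 - z s p))
    \<and> (\<forall>s p. l p s \<ge> lb p s)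
    \<and> z DX BI + z DX BJ + z DY BI + z DY BJ \<ge> 1
    \<and> (\<forall>s. z s BI + z s BJ \<le> 1)
    \<and> (\<forall>s p. z s p \<in> {0, 1})
    \<and> (\<forall>s p. c p s + l p s / 2 + L s * z s p
             \<ge> c (other p) s - l (other p) s / 2 + (lb p s + lb (other p) s) * (z s BI + z s BJ))}"

end

theory Submission
  imports Defs
begin

text \<open>Both sets decouple into one constraint system per direction, linked only through
  the binarity of z and the requirement that z is not identically zero. In a fixed direction
  the binary pair (z_i, z_j) is (0,0), (1,0) or (0,1). In each case the big-M inequalities
  of the formulation either collapse to the precedence or non-overlap clauses of E or are
  implied by the container constraints, while the lower bounds lb tighten the center bounds
  exactly as far as a preceding box of length at least lb forces.\<close>

lemma all_dir_iff: "(\<forall>s. P s) \<longleftrightarrow> P DX \<and> P DY"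
  by (metis dir.exhaust)

lemma all_box_iff: "(\<forall>p. P p) \<longleftrightarrow> P BI \<and> P BJ"
  by (metis box.exhaust)

lemma ex_dir_iff: "(\<exists>s. P s) \<longleftrightarrow> P DX \<or> P DY"
  by (metis dir.exhaust)

lemma ex_box_iff: "(\<exists>p. P p) \<longleftrightarrow> P BI \<or> P BJ"
  by (metis box.exhaust)

text \<open>In direction s: a, b are lb^s_i, lb^s_j and zi, zj are z^s_{i,j}, z^s_{j,i}.\<close>

definition Eset_in_direction ::
    "real \<Rightarrow> real \<Rightarrow> real \<Rightarrow> real \<Rightarrow> real \<Rightarrow> real \<Rightarrow> real \<Rightarrow> real \<Rightarrow> real \<Rightarrow> bool" where
  "Eset_in_direction L a b ci cj li lj zi zj \<longleftrightarrow>
     li/2 \<le> ci \<and> ci \<le> L - li/2 \<and> li \<ge> a \<and> lj/2 \<le> cj \<and> cj \<le> L - lj/2 \<and> lj \<ge> b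
     \<and> zi + zj \<le> 1
     \<and> (zi = 1 \<longrightarrow> ci + li/2 \<le> cj - lj/2)
     \<and> (zj = 1 \<longrightarrow> cj + lj/2 \<le> ci - li/2)
     \<and> (zi = 0 \<and> zj = 0 \<longrightarrow> ci + li/2 \<ge> cj - lj/2 \<and> cj + lj/2 \<ge> ci - li/2)"

definition Formulation_in_direction ::
    "real \<Rightarrow> real \<Rightarrow> real \<Rightarrow> real \<Rightarrow> real \<Rightarrow> real \<Rightarrow> real \<Rightarrow> real \<Rightarrow> real \<Rightarrow> bool" where
  "Formulation_in_direction L a b ci cj li lj zi zj \<longleftrightarrow>
     li/2 + b*zj \<le> ci \<and> ci \<le> L - li/2 - b*zi \<and> lj/2 + a*zi \<le> cj \<and> cj \<le> L - lj/2 - a*zj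
     \<and> ci + li/2 \<le> cj - lj/2 + L*(1 - zi) \<and> cj + lj/2 \<le> ci - li/2 + L*(1 - zj)
     \<and> li \<ge> a \<and> lj \<ge> b \<and> zi + zj \<le> 1
     \<and> ci + li/2 + L*zi \<ge> cj - lj/2 + (a + b)*(zi + zj)
     \<and> cj + lj/2 + L*zj \<ge> ci - li/2 + (b + a)*(zi + zj)"

lemma Eset_in_direction_iff_Formulation_in_direction:
  fixes L a b ci cj li lj zi zj :: real
  assumes "L > 0" "a > 0" "b > 0" "zi \<in> {0, 1}" "zj \<in> {0, 1}"
  shows "Eset_in_direction L a b ci cj li lj zi zj \<longleftrightarrow> Formulation_in_direction L a b ci cj li lj zi zj"
proof -
  consider "zi = 0" "zj = 0" | "zi = 1" "zj = 0" | "zi = 0" "zj = 1" | "zi = 1" "zj = 1"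
    using assms(4,5) by blast
  then show ?thesis
  proof cases
    case 1
    then show ?thesis
      unfolding Eset_in_direction_def Formulation_in_direction_def by auto
  next
    case 2
    then show ?thesis
      unfolding Eset_in_direction_def Formulation_in_direction_def using assms(1-3)
      by (auto simp: algebra_simps)
  next
    case 3
    then show ?thesis
      unfolding Eset_in_direction_def Formulation_in_direction_def using assms(1-3)
      by (auto simp: algebra_simps)
  next
    case 4
    then show ?thesis
      unfolding Eset_in_direction_def Formulation_in_direction_def by auto
  qed
qed

lemma mem_Eset_iff:
  "(c, l, z) \<in> Eset L lb \<longleftrightarrow>
     (\<forall>s p. z s p \<in> {0, 1}) \<and> (\<exists>s p. z s p \<noteq> 0)
     \<and> (\<forall>s. Eset_in_direction (L s) (lb BI s) (lb BJ s)
               (c BI s) (c BJ s) (l BI s) (l BJ s) (z s BI) (z s BJ))"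
  unfolding Eset_def Qlb_def precedes_def not_precedes_def Eset_in_direction_def
  unfolding all_dir_iff all_box_iff by (simp; blast)

lemma mem_Formulation_iff:
  "(c, l, z) \<in> Formulation L lb \<longleftrightarrow>
     (\<forall>s p. z s p \<in> {0, 1}) \<and> z DX BI + z DX BJ + z DY BI + z DY BJ \<ge> 1
     \<and> (\<forall>s. Formulation_in_direction (L s) (lb BI s) (lb BJ s)
               (c BI s) (c BJ s) (l BI s) (l BJ s) (z s BI) (z s BJ))"
  unfolding Formulation_def Formulation_in_direction_def
  unfolding all_dir_iff all_box_iff by (simp add: algebra_simps; blast)

lemma binary_not_all_zero_iff_sum_ge_1:
  fixes z :: "dir \<Rightarrow> box \<Rightarrow> real"
  assumes "\<forall>s p. z s p \<in> {0, 1}"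
  shows "(\<exists>s p. z s p \<noteq> 0) \<longleftrightarrow> z DX BI + z DX BJ + z DY BI + z DY BJ \<ge> 1"
  using assms unfolding all_dir_iff all_box_iff ex_dir_iff ex_box_iff by auto

theorem proposition5p4:
  fixes L :: "dir \<Rightarrow> real" and lb :: "box \<Rightarrow> dir \<Rightarrow> real"
  assumes "\<forall>s. L s > 0" and "\<forall>k s. lb k s > 0"
  shows "Eset L lb = Formulation L lb"
proof (rule set_eqI)
  fix x :: point
  obtain c l z where x: "x = (c, l, z)"
    by (cases x) auto
  show "x \<in> Eset L lb \<longleftrightarrow> x \<in> Formulation L lb"
  proof (cases "\<forall>s p. z s p \<in> {0, 1}")
    case binary: True
    have "Eset_in_direction (L s) (lb BI s) (lb BJ s) (c BI s) (c BJ s) (l BI s) (l BJ s) (z s BI) (z s BJ)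
      \<longleftrightarrow> Formulation_in_direction (L s) (lb BI s) (lb BJ s) (c BI s) (c BJ s) (l BI s) (l BJ s) (z s BI) (z s BJ)"
      for s
      using assms binary by (intro Eset_in_direction_iff_Formulation_in_direction) auto
    then show ?thesis
      unfolding x mem_Eset_iff mem_Formulation_iff binary_not_all_zero_iff_sum_ge_1[OF binary]
      by blast
  next
    case False
    then show ?thesis
      unfolding x mem_Eset_iff mem_Formulation_iff by blast
  qed
qed

end
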